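(* For each integer $l\ge0$, the Taylor coefficients of $G_l(z)=z\,\partial h_l^{(1)}(z)/h_l^{(1)}(z)$ at $z=0$ satisfy $\operatorname{Im}G_l^{(2j)}(0)=0$ and $\operatorname{Re}G_l^{(2j+1)}(0)=0$ for all $j=0,1,2,\dots$, with $G_l(0)=-(l+1)$. Consequently, for $\epsilon$ small the equation $\lambda^2+\hat r_lG_l(\epsilon\lambda)=0$ can be written as $$\lambda^2+\hat r_l\big[\mathcal{A}(\lambda)+\mathcal{B}(\lambda)\big]=0,\qquad \mathcal{A}(\lambda)=-(l+1)+\sum_{j=1}^\infty\frac{(\epsilon\lambda)^{2j}}{(2j)!}G_l^{(2j)}(0),\quad \mathcal{B}(\lambda)=\sum_{j=0}^\infty\frac{(\epsilon\lambda)^{2j+1}}{(2j+1)!}G_l^{(2j+1)}(0),$$ where $\mathcal{A}$ is even and real for real $\lambda$, and $\mathcal{B}$ is odd and purely imaginary for real $\lambda$.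
   Context: $h_l^{(1)}$ is the outgoing spherical Hankel function of order $l$, equivalently $h_l^{(1)}(z)=z^{-l-1}p_l(z)e^{iz}$ with $p_l(z)=\sum_{n=0}^l\frac{i^{-n-1}}{2^{l-n}}\frac{(2l-n)!}{(l-n)!\,n!}z^n$. Parameters $\mathrm{Ca},\mathrm{We}>0$, $\gamma>1$; $\hat r_0=\frac{3\gamma}{2}\mathrm{Ca}+2(3\gamma-1)\frac{1}{\mathrm{We}}$, $\hat r_l=\frac{1}{\mathrm{We}}(l+2)(l-1)$ for $l\ge1$. *)

theory Defs
  imports "HOL-Complex_Analysis.Complex_Analysis"
begin

definition hankel_poly :: "nat \<Rightarrow> complex \<Rightarrow> complex" where
  "hankel_poly l z = (\<Sum>n=0..l. inverse (\<i> ^ (n + 1)) / 2 ^ (l - n)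
       * (of_nat (fact (2 * l - n)) / (of_nat (fact (l - n)) * of_nat (fact n))) * z ^ n)"

definition hankel1 :: "nat \<Rightarrow> complex \<Rightarrow> complex" where
  "hankel1 l z = hankel_poly l z * exp (\<i> * z) / z ^ (l + 1)"

text \<open>G_l(z) = z h_l'(z) / h_l(z); at the removable singularity z = 0 it is given
  by its limit (the value of the analytic extension).\<close>
definition G :: "nat \<Rightarrow> complex \<Rightarrow> complex" where
  "G l z = (if z = 0 then Lim (at 0) (\<lambda>w. w * deriv (hankel1 l) w / hankel1 l w)
            else z * deriv (hankel1 l) z / hankel1 l z)"

definition rhat :: "real \<Rightarrow> real \<Rightarrow> real \<Rightarrow> nat \<Rightarrow> real" where
  "rhat Ca We \<gamma> l = (if l = 0 then 3 * \<gamma> / 2 * Ca + 2 * (3 * \<gamma> - 1) * (1 / We)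
                       else (1 / We) * (real l + 2) * (real l - 1))"

text \<open>Terms of the even part (j \<ge> 1, reindexed from 0) and of the odd part.\<close>
definition A_term :: "nat \<Rightarrow> real \<Rightarrow> complex \<Rightarrow> nat \<Rightarrow> complex" where
  "A_term l \<epsilon> lam j = (of_real \<epsilon> * lam) ^ (2 * (j + 1)) / of_nat (fact (2 * (j + 1)))
       * (deriv ^^ (2 * (j + 1))) (G l) 0"

definition B_term :: "nat \<Rightarrow> real \<Rightarrow> complex \<Rightarrow> nat \<Rightarrow> complex" where
  "B_term l \<epsilon> lam j = (of_real \<epsilon> * lam) ^ (2 * j + 1) / of_nat (fact (2 * j + 1))
       * (deriv ^^ (2 * j + 1)) (G l) 0"

definition calA :: "nat \<Rightarrow> real \<Rightarrow> complex \<Rightarrow> complex" where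
  "calA l \<epsilon> lam = - of_nat (l + 1) + (\<Sum>j. A_term l \<epsilon> lam j)"

definition calB :: "nat \<Rightarrow> real \<Rightarrow> complex \<Rightarrow> complex" where
  "calB l \<epsilon> lam = (\<Sum>j. B_term l \<epsilon> lam j)"

end

theory Submission
  imports Defs
begin

text \<open>Differentiating \<open>h_l(z) = z^(-l-1) p_l(z) e^(iz)\<close> gives
  \<open>G_l(z) = -(l+1) + iz + z p_l'(z) / p_l(z)\<close>, which is holomorphic near \<open>0\<close> since
  \<open>p_l(0) \<noteq> 0\<close>, and equals \<open>-(l+1)\<close> there. The n-th coefficient of \<open>p_l\<close> is \<open>i^(-n-1)\<close>
  times a positive real, so \<open>p_l(it)\<close> is \<open>-i\<close> times a real number and \<open>p_l'(it)\<close> is real: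
  \<open>G_l\<close> is real on the imaginary axis. Then \<open>w \<mapsto> G_l(iw)\<close> is real on the real axis, so its
  Taylor coefficients \<open>i^n G_l^(n)(0)\<close> are real, which is the parity statement. Splitting the
  absolutely convergent Taylor series of \<open>G_l\<close> into even and odd terms gives \<open>A\<close> and \<open>B\<close>.\<close>

lemma deriv_of_real_in_Reals:
  fixes f :: "complex \<Rightarrow> complex"
  assumes hol: "f holomorphic_on ball 0 r"
    and real: "\<And>t::real. \<bar>t\<bar> < r \<Longrightarrow> f (of_real t) \<in> \<real>"
    and x: "\<bar>x\<bar> < r"
  shows "deriv f (of_real x) \<in> \<real>"
proof -
  have "(f has_field_derivative deriv f (of_real x)) (at (of_real x))"
    using hol x by (intro holomorphic_derivI[of _ "ball 0 r"]) auto
  hence "((\<lambda>t. f (of_real t)) has_derivative (\<lambda>h. h *\<^sub>R deriv f (of_real x))) (at x)"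
    using has_vector_derivative_real_field by (auto simp: has_vector_derivative_def)
  hence "((\<lambda>t. Im (f (of_real t))) has_derivative (\<lambda>h. Im (h *\<^sub>R deriv f (of_real x)))) (at x)"
    by (rule has_derivative_Im)
  hence Im_deriv: "((\<lambda>t. Im (f (of_real t))) has_field_derivative Im (deriv f (of_real x))) (at x)"
    unfolding has_field_derivative_def by (rule has_derivative_eq_rhs) (auto simp: fun_eq_iff)
  have "((\<lambda>t. Im (f (of_real t))) has_field_derivative 0) (at x)"
  proof (rule has_field_derivative_transform_within_open[where S = "{t. \<bar>t\<bar> < r}"])
    show "open {t::real. \<bar>t\<bar> < r}" by (intro open_Collect_less continuous_intros)
  qed (use x real in \<open>auto simp: complex_is_Real_iff\<close>)
  with Im_deriv have "Im (deriv f (of_real x)) = 0" by (rule DERIV_unique)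
  thus ?thesis by (simp add: complex_is_Real_iff)
qed

lemma higher_deriv_of_real_in_Reals:
  fixes f :: "complex \<Rightarrow> complex"
  assumes hol: "f holomorphic_on ball 0 r"
    and real: "\<And>t::real. \<bar>t\<bar> < r \<Longrightarrow> f (of_real t) \<in> \<real>"
    and x: "\<bar>x\<bar> < r"
  shows "(deriv ^^ n) f (of_real x) \<in> \<real>"
  using x
proof (induction n arbitrary: x)
  case (Suc n)
  show ?case
    using deriv_of_real_in_Reals[OF holomorphic_higher_deriv[OF hol] Suc.IH Suc.prems] by simp
qed (use real in simp)

lemma higher_deriv_parity_if_real_on_imaginary_axis:
  fixes f :: "complex \<Rightarrow> complex"
  assumes hol: "f holomorphic_on ball 0 r" and "r > 0"
    and real: "\<And>t::real. \<bar>t\<bar> < r \<Longrightarrow> f (\<i> * of_real t) \<in> \<real>"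
  shows "Im ((deriv ^^ (2 * j)) f 0) = 0" and "Re ((deriv ^^ (2 * j + 1)) f 0) = 0"
proof -
  have "(\<lambda>w. f (\<i> * w)) holomorphic_on ball 0 r"
    by (rule holomorphic_on_compose_gen[OF _ hol, unfolded o_def])
       (auto intro!: holomorphic_intros simp: norm_mult)
  from higher_deriv_of_real_in_Reals[OF this real, of 0]
  have "(deriv ^^ n) (\<lambda>w. f (\<i> * w)) 0 \<in> \<real>" for n
    using \<open>r > 0\<close> by simp
  moreover have "(deriv ^^ n) (\<lambda>w. f (\<i> * w)) 0 = \<i> ^ n * (deriv ^^ n) f 0" for n
    using hol \<open>r > 0\<close>
    by (subst higher_deriv_compose_linear[where S = "ball 0 r" and T = "ball 0 r"])
       (auto simp: norm_mult)
  ultimately have rotated_real: "\<i> ^ n * (deriv ^^ n) f 0 \<in> \<real>" for n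
    by metis
  have "\<i> ^ (2 * j) = of_real ((-1) ^ j)" and "\<i> ^ (2 * j + 1) = \<i> * of_real ((-1) ^ j)"
    by (simp_all add: power_mult)
  with rotated_real[of "2 * j"] rotated_real[of "2 * j + 1"]
  show "Im ((deriv ^^ (2 * j)) f 0) = 0" and "Re ((deriv ^^ (2 * j + 1)) f 0) = 0"
    by (simp_all add: complex_is_Real_iff)
qed

lemma summable_norm_split_even_odd:
  fixes a :: "nat \<Rightarrow> 'a::banach"
  assumes "summable (\<lambda>n. norm (a n))"
  shows "summable (\<lambda>j. a (2 * j))" and "summable (\<lambda>j. a (2 * j + 1))"
    and "suminf a = (\<Sum>j. a (2 * j)) + (\<Sum>j. a (2 * j + 1))"
proof -
  define Ev where "Ev n = (if even n then a n else 0)" for n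
  define Od where "Od n = (if odd n then a n else 0)" for n
  have "summable Ev" "summable Od"
    by (auto intro: summable_comparison_test[OF _ assms] simp: Ev_def Od_def)
  have "(\<lambda>j. Ev (2 * j)) sums suminf Ev"
    by (subst sums_mono_reindex[of "\<lambda>j. 2 * j"])
       (auto simp: strict_mono_def Ev_def summable_sums[OF \<open>summable Ev\<close>] elim!: oddE)
  hence even_sums: "(\<lambda>j. a (2 * j)) sums suminf Ev" by (simp add: Ev_def)
  have "(\<lambda>j. Od (2 * j + 1)) sums suminf Od"
    by (subst sums_mono_reindex[of "\<lambda>j. 2 * j + 1"])
       (auto simp: strict_mono_def Od_def summable_sums[OF \<open>summable Od\<close>] image_iff elim!: oddE)
  hence odd_sums: "(\<lambda>j. a (2 * j + 1)) sums suminf Od" by (simp add: Od_def)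
  have "a = (\<lambda>n. Ev n + Od n)" by (auto simp: Ev_def Od_def)
  hence "suminf a = suminf Ev + suminf Od"
    using suminf_add[OF \<open>summable Ev\<close> \<open>summable Od\<close>] by simp
  with even_sums odd_sums
  show "summable (\<lambda>j. a (2 * j))" "summable (\<lambda>j. a (2 * j + 1))"
    "suminf a = (\<Sum>j. a (2 * j)) + (\<Sum>j. a (2 * j + 1))"
    by (auto simp: sums_iff)
qed

lemma holomorphic_power_series_even_odd:
  fixes f :: "complex \<Rightarrow> complex"
  assumes hol: "f holomorphic_on ball 0 r" and w: "norm w < r"
  defines "a \<equiv> \<lambda>n. w ^ n / fact n * (deriv ^^ n) f 0"
  shows "summable (\<lambda>j. a (2 * (j + 1)))" and "summable (\<lambda>j. a (2 * j + 1))"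
    and "f w = f 0 + (\<Sum>j. a (2 * (j + 1))) + (\<Sum>j. a (2 * j + 1))"
proof -
  have "a sums f w"
    using holomorphic_power_series[OF hol] w by (simp add: a_def mult_ac)
  obtain \<rho> where "norm w < \<rho>" "\<rho> < r"
    using dense w by blast
  define w' :: complex where "w' = of_real \<rho>"
  have "0 < \<rho>"
    using \<open>norm w < \<rho>\<close> norm_ge_zero[of w] by linarith
  hence "norm w' = \<rho>"
    by (simp add: w'_def)
  hence "norm w < norm w'" "w' \<in> ball 0 r"
    using \<open>norm w < \<rho>\<close> \<open>\<rho> < r\<close> by auto
  have "summable (\<lambda>n. (deriv ^^ n) f 0 / fact n * w' ^ n)"
    using holomorphic_power_series[OF hol \<open>w' \<in> ball 0 r\<close>] by (simp add: sums_iff)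
  hence "summable (\<lambda>n. norm ((deriv ^^ n) f 0 / fact n * w ^ n))"
    using \<open>norm w < norm w'\<close> by (rule powser_insidea)
  hence "summable (\<lambda>n. norm (a n))"
    by (simp add: a_def mult_ac)
  note split = summable_norm_split_even_odd[OF this]
  show "summable (\<lambda>j. a (2 * (j + 1)))"
    using split(1) summable_Suc_iff[of "\<lambda>j. a (2 * j)"] by simp
  show "summable (\<lambda>j. a (2 * j + 1))" by (fact split(2))
  have "(\<Sum>j. a (2 * j)) = (\<Sum>j. a (2 * (j + 1))) + a 0"
    using suminf_split_head[OF split(1)] by simp
  moreover have "a 0 = f 0" by (simp add: a_def)
  ultimately show "f w = f 0 + (\<Sum>j. a (2 * (j + 1))) + (\<Sum>j. a (2 * j + 1))"
    using \<open>a sums f w\<close> split(3) by (simp add: sums_iff ac_simps)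
qed

definition hankel_coeff :: "nat \<Rightarrow> nat \<Rightarrow> real" where
  "hankel_coeff l n = fact (2 * l - n) / (2 ^ (l - n) * fact (l - n) * fact n)"

definition hankel_dpoly :: "nat \<Rightarrow> complex \<Rightarrow> complex" where
  "hankel_dpoly l z = (\<Sum>n=0..l. inverse (\<i> ^ (n + 1)) * of_real (hankel_coeff l n) * (of_nat n * z ^ (n - 1)))"

definition G_rational :: "nat \<Rightarrow> complex \<Rightarrow> complex" where
  "G_rational l z = - of_nat (l + 1) + \<i> * z + z * hankel_dpoly l z / hankel_poly l z"

lemma hankel_poly_eq:
  "hankel_poly l z = (\<Sum>n=0..l. inverse (\<i> ^ (n + 1)) * of_real (hankel_coeff l n) * z ^ n)"
  by (simp add: hankel_poly_def hankel_coeff_def mult.assoc)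

lemma hankel_poly_has_field_derivative:
  "(hankel_poly l has_field_derivative hankel_dpoly l z) (at z)"
  unfolding hankel_poly_eq[abs_def] hankel_dpoly_def
  by (auto intro!: derivative_eq_intros simp: ac_simps)

lemma hankel_poly_0: "hankel_poly l 0 = - \<i> * of_real (hankel_coeff l 0)"
proof -
  have "hankel_poly l 0 = (\<Sum>n=0..l. if n = 0 then - \<i> * of_real (hankel_coeff l 0) else 0)"
    unfolding hankel_poly_eq by (rule sum.cong) auto
  thus ?thesis by simp
qed

lemma hankel_poly_nonzero_near_0: "\<exists>r>0. \<forall>z\<in>ball 0 r. hankel_poly l z \<noteq> 0"
proof -
  have "isCont (hankel_poly l) 0"
    unfolding hankel_poly_eq[abs_def] by (intro continuous_intros)
  moreover have "hankel_poly l 0 \<noteq> 0"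
    by (simp add: hankel_poly_0 hankel_coeff_def)
  ultimately obtain e where "e > 0" "\<forall>y. dist 0 y < e \<longrightarrow> hankel_poly l y \<noteq> 0"
    using continuous_at_avoid by blast
  thus ?thesis by auto
qed

lemma G_eq_G_rational_nonzero:
  assumes "z \<noteq> 0" and "hankel_poly l z \<noteq> 0"
  shows "G l z = G_rational l z"
proof -
  let ?p = "hankel_poly l z" and ?dp = "hankel_dpoly l z" and ?e = "exp (\<i> * z)"
  have "(hankel1 l has_field_derivative
      ((?dp * ?e + ?p * (?e * \<i>)) * z ^ (l + 1) - ?p * ?e * (of_nat (l + 1) * z ^ l))
        / (z ^ (l + 1) * z ^ (l + 1))) (at z)"
    unfolding hankel1_def[abs_def] using assms(1)
    by (intro derivative_eq_intros hankel_poly_has_field_derivative refl)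
       (auto simp: algebra_simps hankel_poly_has_field_derivative)
  hence "deriv (hankel1 l) z =
      ((?dp * ?e + ?p * (?e * \<i>)) * z ^ (l + 1) - ?p * ?e * (of_nat (l + 1) * z ^ l))
        / (z ^ (l + 1) * z ^ (l + 1))"
    by (rule DERIV_imp_deriv)
  hence "G l z = z * (((?dp * ?e + ?p * (?e * \<i>)) * z ^ (l + 1) - ?p * ?e * (of_nat (l + 1) * z ^ l))
        / (z ^ (l + 1) * z ^ (l + 1))) / (?p * ?e / z ^ (l + 1))"
    using assms(1) by (simp add: G_def hankel1_def)
  also have "\<dots> = G_rational l z"
    using assms by (simp add: G_rational_def field_simps power2_eq_square)
  finally show ?thesis .
qed

lemma G_rational_holomorphic:
  assumes "\<forall>z\<in>S. hankel_poly l z \<noteq> 0"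
  shows "G_rational l holomorphic_on S"
  using assms unfolding G_rational_def[abs_def] hankel_dpoly_def hankel_poly_eq
  by (intro holomorphic_intros) auto

lemma G_eq_G_rational:
  assumes nonzero: "\<forall>z\<in>ball 0 r. hankel_poly l z \<noteq> 0" and z: "z \<in> ball 0 r"
  shows "G l z = G_rational l z"
proof (cases "z = 0")
  case True
  have "isCont (G_rational l) 0"
    using G_rational_holomorphic[OF nonzero] z True
    by (meson centre_in_ball field_differentiable_imp_continuous_at
        holomorphic_on_imp_differentiable_at open_ball)
  moreover have "eventually (\<lambda>w. G_rational l w = w * deriv (hankel1 l) w / hankel1 l w) (at 0)"
    unfolding eventually_at using z nonzero True
    by (intro exI[of _ r]) (auto simp: G_eq_G_rational_nonzero[symmetric] G_def dist_norm)
  ultimately have "((\<lambda>w. w * deriv (hankel1 l) w / hankel1 l w) \<longlongrightarrow> G_rational l 0) (at 0)"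
    using tendsto_cong isContD by fastforce
  thus ?thesis unfolding G_def True by (simp add: tendsto_Lim)
qed (use assms G_eq_G_rational_nonzero in auto)

lemma hankel_poly_imaginary:
  "hankel_poly l (\<i> * of_real t) = - \<i> * of_real (\<Sum>n=0..l. hankel_coeff l n * t ^ n)"
proof -
  have "inverse (\<i> ^ (n + 1)) * \<i> ^ n = - \<i>" for n
    by (simp add: inverse_mult_distrib)
  hence "hankel_poly l (\<i> * of_real t) = (\<Sum>n=0..l. - \<i> * of_real (hankel_coeff l n * t ^ n))"
    unfolding hankel_poly_eq by (intro sum.cong) (auto simp: power_mult_distrib ac_simps)
  thus ?thesis by (simp add: sum_distrib_left)
qed

lemma hankel_dpoly_imaginary:
  "hankel_dpoly l (\<i> * of_real t) = - of_real (\<Sum>n=0..l. hankel_coeff l n * of_nat n * t ^ (n - 1))"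
proof -
  have i_power: "inverse (\<i> ^ (m + 2)) * \<i> ^ m = - 1" for m
    by (simp add: inverse_mult_distrib power_add)
  have "inverse (\<i> ^ (n + 1)) * of_real (hankel_coeff l n) * (of_nat n * (\<i> * of_real t) ^ (n - 1))
      = - of_real (hankel_coeff l n * of_nat n * t ^ (n - 1))" for n
  proof (cases n)
    case (Suc m)
    have "inverse (\<i> ^ (n + 1)) * of_real (hankel_coeff l n) * (of_nat n * (\<i> * of_real t) ^ (n - 1))
        = (inverse (\<i> ^ (m + 2)) * \<i> ^ m) * of_real (hankel_coeff l n * of_nat n * t ^ (n - 1))"
      using Suc by (simp add: power_mult_distrib)
    thus ?thesis by (simp only: i_power) simp
  qed simp
  hence "hankel_dpoly l (\<i> * of_real t)
      = (\<Sum>n=0..l. - of_real (hankel_coeff l n * of_nat n * t ^ (n - 1)))"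
    unfolding hankel_dpoly_def by (intro sum.cong) auto
  thus ?thesis by (simp add: sum_negf)
qed

lemma G_rational_imaginary_in_Reals:
  assumes "hankel_poly l (\<i> * of_real t) \<noteq> 0"
  shows "G_rational l (\<i> * of_real t) \<in> \<real>"
proof -
  define P where "P = (\<Sum>n=0..l. hankel_coeff l n * t ^ n)"
  define DP where "DP = (\<Sum>n=0..l. hankel_coeff l n * of_nat n * t ^ (n - 1))"
  have "P \<noteq> 0"
    using assms unfolding hankel_poly_imaginary P_def[symmetric] by auto
  hence "G_rational l (\<i> * of_real t) = of_real (- real (l + 1) - t + t * DP / P)"
    unfolding G_rational_def hankel_poly_imaginary hankel_dpoly_imaginary
      P_def[symmetric] DP_def[symmetric]
    by (simp add: field_simps)
  thus ?thesis by simp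
qed

lemma G_taylor_even_odd:
  assumes "G l holomorphic_on ball 0 r" and "norm (of_real \<epsilon> * lam) < r"
    and "G l 0 = - of_nat (l + 1)"
  shows "summable (A_term l \<epsilon> lam)" and "summable (B_term l \<epsilon> lam)"
    and "G l (of_real \<epsilon> * lam) = calA l \<epsilon> lam + calB l \<epsilon> lam"
proof -
  have "A_term l \<epsilon> lam = (\<lambda>j. (of_real \<epsilon> * lam) ^ (2 * (j + 1)) / fact (2 * (j + 1))
      * (deriv ^^ (2 * (j + 1))) (G l) 0)"
    and "B_term l \<epsilon> lam = (\<lambda>j. (of_real \<epsilon> * lam) ^ (2 * j + 1) / fact (2 * j + 1)
      * (deriv ^^ (2 * j + 1)) (G l) 0)"
    unfolding A_term_def[abs_def] B_term_def[abs_def] of_nat_fact by (rule refl)+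
  thus "summable (A_term l \<epsilon> lam)" and "summable (B_term l \<epsilon> lam)"
    and "G l (of_real \<epsilon> * lam) = calA l \<epsilon> lam + calB l \<epsilon> lam"
    using holomorphic_power_series_even_odd[OF assms(1,2)] assms(3)
    by (simp_all only: calA_def calB_def add.assoc)
qed

lemma calA_minus: "calA l \<epsilon> (- lam) = calA l \<epsilon> lam"
  by (simp add: calA_def A_term_def)

lemma calB_minus:
  assumes "summable (B_term l \<epsilon> lam)"
  shows "calB l \<epsilon> (- lam) = - calB l \<epsilon> lam"
proof -
  have "B_term l \<epsilon> (- lam) = (\<lambda>j. - B_term l \<epsilon> lam j)"
    by (simp add: fun_eq_iff B_term_def)
  thus ?thesis by (simp add: calB_def suminf_minus[OF assms])
qed

lemma calA_calB_real_axis: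
  assumes parity: "\<forall>j. Im ((deriv ^^ (2 * j)) (G l) 0) = 0 \<and> Re ((deriv ^^ (2 * j + 1)) (G l) 0) = 0"
    and "summable (A_term l \<epsilon> lam)" and "summable (B_term l \<epsilon> lam)" and "lam \<in> \<real>"
  shows "calA l \<epsilon> lam \<in> \<real>" and "Re (calB l \<epsilon> lam) = 0"
proof -
  obtain t where t: "lam = of_real t" using \<open>lam \<in> \<real>\<close> by (auto elim: Reals_cases)
  have real_factor: "(of_real \<epsilon> * lam) ^ n / of_nat (fact n) = of_real ((\<epsilon> * t) ^ n / fact n)" for n
    by (simp add: t)
  have real_mult: "Im (of_real c * d) = c * Im d" "Re (of_real c * d) = c * Re d" for c d
    by simp_all
  have "Im ((deriv ^^ (2 * (j + 1))) (G l) 0) = 0" and "Re ((deriv ^^ (2 * j + 1)) (G l) 0) = 0" for j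
    using parity by blast+
  hence "Im (A_term l \<epsilon> lam j) = 0" and "Re (B_term l \<epsilon> lam j) = 0" for j
    unfolding A_term_def B_term_def real_factor real_mult by simp_all
  with assms(2,3) have "Im (calA l \<epsilon> lam) = 0" and "Re (calB l \<epsilon> lam) = 0"
    by (simp_all add: calA_def calB_def Im_suminf Re_suminf)
  thus "calA l \<epsilon> lam \<in> \<real>" and "Re (calB l \<epsilon> lam) = 0"
    by (simp_all add: complex_is_Real_iff)
qed

theorem proposition8p1:
  fixes l :: nat and Ca We \<gamma> :: real
  assumes "Ca > 0" and "We > 0" and "\<gamma> > 1"
  shows "(\<forall>j. Im ((deriv ^^ (2 * j)) (G l) 0) = 0 \<and> Re ((deriv ^^ (2 * j + 1)) (G l) 0) = 0)
     \<and> G l 0 = - of_nat (l + 1)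
     \<and> (\<exists>\<delta>>0. \<forall>(\<epsilon>::real) (lam::complex). norm (of_real \<epsilon> * lam) < \<delta> \<longrightarrow>
          summable (A_term l \<epsilon> lam) \<and> summable (B_term l \<epsilon> lam)
          \<and> G l (of_real \<epsilon> * lam) = calA l \<epsilon> lam + calB l \<epsilon> lam
          \<and> (lam\<^sup>2 + of_real (rhat Ca We \<gamma> l) * G l (of_real \<epsilon> * lam) = 0
               \<longleftrightarrow> lam\<^sup>2 + of_real (rhat Ca We \<gamma> l) * (calA l \<epsilon> lam + calB l \<epsilon> lam) = 0)
          \<and> calA l \<epsilon> (- lam) = calA l \<epsilon> lam
          \<and> calB l \<epsilon> (- lam) = - calB l \<epsilon> lam
          \<and> (lam \<in> \<real> \<longrightarrow> calA l \<epsilon> lam \<in> \<real> \<and> Re (calB l \<epsilon> lam) = 0))"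
proof -
  obtain r where "r > 0" and nonzero: "\<forall>z\<in>ball 0 r. hankel_poly l z \<noteq> 0"
    using hankel_poly_nonzero_near_0 by blast
  note G_ball = G_eq_G_rational[OF nonzero]
  have hol: "G l holomorphic_on ball 0 r"
    using holomorphic_transform[OF G_rational_holomorphic[OF nonzero]] G_ball by metis
  have "G l (\<i> * of_real t) \<in> \<real>" if "\<bar>t\<bar> < r" for t
    using that nonzero G_ball G_rational_imaginary_in_Reals by (simp add: norm_mult)
  with hol \<open>r > 0\<close> have parity:
    "\<forall>j. Im ((deriv ^^ (2 * j)) (G l) 0) = 0 \<and> Re ((deriv ^^ (2 * j + 1)) (G l) 0) = 0"
    using higher_deriv_parity_if_real_on_imaginary_axis by blast
  have G0: "G l 0 = - of_nat (l + 1)"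
    using G_ball[of 0] \<open>r > 0\<close> by (simp add: G_rational_def)
  show ?thesis
    using parity G0 \<open>r > 0\<close> G_taylor_even_odd[OF hol _ G0] calA_minus calB_minus
      calA_calB_real_axis[OF parity]
    by (intro conjI exI[of _ r] allI impI) auto
qed

end
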